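(* For every integer $n \geq 1$, we have $\gamma_{\mathrm{aff}}(B_n) = n+1$, where $B_n$ is the closed unit ball of the Euclidean space $\mathbf{R}^n$.
   Context: For a convex body $K \subset \mathbf{R}^n$, an affine map $\Phi : \mathbf{R}^n \to \mathbf{R}^n$ is $K$-positive if $\Phi(K) \subset K$, strictly $K$-positive if $\Phi(K) \subset \mathrm{int}(K)$, and $K$-primitive if it is $K$-positive and there is an integer $k \geq 1$ with $\Phi^k$ strictly $K$-positive; the smallest such $k$ is $\gamma_{\mathrm{aff}}(K,\Phi)$. The affine maximal exponent $\gamma_{\mathrm{aff}}(K)$ is the supremum of $\gamma_{\mathrm{aff}}(K,\Phi)$ over all $K$-primitive affine maps $\Phi : \mathbf{R}^n \to \mathbf{R}^n$. *)

theory Defs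
  imports "HOL-Analysis.Analysis" "HOL-Library.Extended_Nat"
begin

definition affine_map :: "('a::real_vector \<Rightarrow> 'a) \<Rightarrow> bool" where
  "affine_map \<Phi> \<longleftrightarrow> (\<exists>L b. linear L \<and> (\<forall>x. \<Phi> x = L x + b))"

definition K_positive :: "'a::real_normed_vector set \<Rightarrow> ('a \<Rightarrow> 'a) \<Rightarrow> bool" where
  "K_positive K \<Phi> \<longleftrightarrow> \<Phi> ` K \<subseteq> K"

definition strictly_K_positive :: "'a::real_normed_vector set \<Rightarrow> ('a \<Rightarrow> 'a) \<Rightarrow> bool" where
  "strictly_K_positive K \<Phi> \<longleftrightarrow> \<Phi> ` K \<subseteq> interior K"

definition K_primitive :: "'a::real_normed_vector set \<Rightarrow> ('a \<Rightarrow> 'a) \<Rightarrow> bool" where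
  "K_primitive K \<Phi> \<longleftrightarrow> K_positive K \<Phi> \<and> (\<exists>k::nat. k \<ge> 1 \<and> strictly_K_positive K (\<Phi> ^^ k))"

definition gamma_aff_map :: "'a::real_normed_vector set \<Rightarrow> ('a \<Rightarrow> 'a) \<Rightarrow> nat" where
  "gamma_aff_map K \<Phi> = (LEAST k::nat. k \<ge> 1 \<and> strictly_K_positive K (\<Phi> ^^ k))"

definition gamma_aff :: "'a::real_normed_vector set \<Rightarrow> enat" where
  "gamma_aff K = (SUP \<Phi> \<in> {\<Phi>. affine_map \<Phi> \<and> K_primitive K \<Phi>}. enat (gamma_aff_map K \<Phi>))"

end

theory Submission
  imports Defs
begin

(*
  For a primitive affine self-map \<Phi> of the ball let T k be the set of points of
  the ball that \<Phi>^k sends to the unit sphere.  A point of the open ball sent to the sphere would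
  make \<Phi> constant, so the sets T k lie on the sphere and decrease.  At each point of T k the
  gradient of |\<Phi>^k z|^2 is normal to the sphere, with one common factor \<mu>, so that
  |\<Phi>^k z|^2 - 1 = \<mu> (|z|^2 - 1) on the affine hull of T k: thus T k is the trace of its own
  affine hull on the sphere.  If T (k+1) = T k, this set is \<Phi>-invariant, which contradicts
  primitivity unless it is empty.  Hence the affine dimension of T k drops at every step until T k
  becomes empty, so T (n+1) is empty, i.e. \<Phi>^(n+1) maps the ball into its interior.

  The map that halves every coordinate while shifting it one place down and feeds
  a suitable affine function of the last coordinate into the first one maps the ball into itself;
  it sends x to the sphere only if |x| = 1 and the last coordinate of x equals a fixed \<tau> > 0.
  An explicit unit vector stays on the sphere for n steps, while a point staying there for
  n+1 steps would have a negative last coordinate after n steps.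
*)

lemma K_positive_cball_iff:
  "K_positive (cball 0 1) f \<longleftrightarrow> (\<forall>x. norm x \<le> 1 \<longrightarrow> norm (f x) \<le> 1)"
  by (auto simp: K_positive_def image_subset_iff)

lemma strictly_K_positive_cball_iff:
  fixes f :: "'a::{real_normed_vector, perfect_space} \<Rightarrow> 'a"
  shows "strictly_K_positive (cball 0 1) f \<longleftrightarrow> (\<forall>x. norm x \<le> 1 \<longrightarrow> norm (f x) < 1)"
  by (auto simp: strictly_K_positive_def image_subset_iff)

lemma affine_map_iff_linear: "affine_map f \<longleftrightarrow> linear (\<lambda>x. f x - f 0)"
proof
  assume "affine_map f"
  then obtain L b where "linear L" "\<And>x. f x = L x + b" by (auto simp: affine_map_def)
  then show "linear (\<lambda>x. f x - f 0)" by (simp add: linear_0)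
next
  assume "linear (\<lambda>x. f x - f 0)"
  then show "affine_map f"
    unfolding affine_map_def by (intro exI[of _ "\<lambda>x. f x - f 0"] exI[of _ "f 0"]) simp
qed

lemma affine_map_funpow:
  fixes f :: "'a::real_vector \<Rightarrow> 'a"
  assumes "affine_map f"
  shows "affine_map (f ^^ k)"
proof (induction k)
  case 0
  show ?case by (simp add: affine_map_iff_linear linear_id[unfolded id_def])
next
  case (Suc k)
  obtain L b where "linear L" "\<And>x. (f ^^ k) x = L x + b"
    using Suc.IH by (auto simp: affine_map_def)
  moreover obtain M d where "linear M" "\<And>x. f x = M x + d"
    using assms by (auto simp: affine_map_def)
  ultimately have "linear (M \<circ> L)" "\<And>x. (f ^^ Suc k) x = (M \<circ> L) x + (M b + d)"
    by (simp_all add: linear_compose linear_add)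
  then show ?case unfolding affine_map_def by blast
qed

lemma gamma_aff_map_le:
  assumes "1 \<le> k" "strictly_K_positive K (f ^^ k)"
  shows "gamma_aff_map K f \<le> k"
  unfolding gamma_aff_map_def using assms by (intro Least_le) simp

lemma gamma_aff_map_eqI:
  assumes "1 \<le> k" "strictly_K_positive K (f ^^ k)"
    and "\<And>j. 1 \<le> j \<Longrightarrow> j < k \<Longrightarrow> \<not> strictly_K_positive K (f ^^ j)"
  shows "gamma_aff_map K f = k"
  unfolding gamma_aff_map_def using assms by (intro Least_equality) (auto simp: not_less[symmetric])

lemma K_positive_funpow:
  assumes "K_positive K f"
  shows "K_positive K (f ^^ k)"
proof (induction k)
  case (Suc k)
  then show ?case using assms by (auto simp: K_positive_def image_subset_iff)
qed (simp add: K_positive_def)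

lemma norm_funpow_eq_1_earlier:
  fixes f :: "'a::real_normed_vector \<Rightarrow> 'a"
  assumes pos: "K_positive (cball 0 1) f" and open_ball: "f ` ball 0 1 \<subseteq> ball 0 1"
    and "norm x \<le> 1" "norm ((f ^^ k) x) = 1" "j \<le> k"
  shows "norm ((f ^^ j) x) = 1"
proof -
  have start: "norm y = 1" if "norm y \<le> 1" "norm ((f ^^ i) y) = 1" for i y
    using that
  proof (induction i arbitrary: y)
    case (Suc i)
    have "norm ((f ^^ i) (f y)) = 1"
      using Suc.prems(2) by (simp add: funpow_Suc_right del: funpow.simps)
    moreover have "norm (f y) \<le> 1"
      using pos Suc.prems(1) by (simp add: K_positive_cball_iff)
    ultimately have "norm (f y) = 1" using Suc.IH by blast
    moreover have "norm (f y) < 1" if "norm y < 1"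
      using open_ball that by (auto simp: image_subset_iff)
    ultimately show ?case using Suc.prems(1) by force
  qed simp
  have "(f ^^ k) x = (f ^^ (k - j)) ((f ^^ j) x)"
    using \<open>j \<le> k\<close> by (metis funpow_add le_add_diff_inverse2 o_apply)
  moreover have "norm ((f ^^ j) x) \<le> 1"
    using K_positive_funpow[OF pos] assms(3) by (simp add: K_positive_cball_iff)
  ultimately show ?thesis using start[of "(f ^^ j) x" "k - j"] assms(4) by simp
qed

section \<open>Affine maps touching the unit sphere\<close>

lemma linear_eq_0_if_interior_contact:
  fixes A :: "'a::real_normed_vector \<Rightarrow> 'b::real_inner"
  assumes lin: "linear A" and into: "\<And>z. norm z \<le> 1 \<Longrightarrow> norm (A z + c) \<le> 1"
    and y: "norm y < 1" "norm (A y + c) = 1"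
  shows "A w = 0"
proof -
  define e where "e = 1 - norm y"
  have "e > 0" using y by (simp add: e_def)
  have small: "A v = 0" if "norm v \<le> e" for v
  proof -
    have "norm (y + v) \<le> 1" "norm (y - v) \<le> 1"
      using norm_triangle_ineq[of y v] norm_triangle_ineq4[of y v] that by (simp_all add: e_def)
    then have "norm (A (y + v) + c)^2 \<le> 1" "norm (A (y - v) + c)^2 \<le> 1"
      using into by (simp_all add: power_le_one)
    moreover have "A (y + v) + c = (A y + c) + A v" "A (y - v) + c = (A y + c) - A v"
      using linear_add[OF lin] linear_diff[OF lin] by (simp_all add: algebra_simps)
    then have "norm (A (y + v) + c)^2 + norm (A (y - v) + c)^2
        = 2 * norm (A y + c)^2 + 2 * norm (A v)^2"
      by (simp add: power2_norm_eq_inner inner_add_left inner_add_right inner_diff_left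
          inner_diff_right inner_commute)
    moreover have "norm (A y + c)^2 = 1" using y by simp
    ultimately have "norm (A v)^2 \<le> 0" by linarith
    then show ?thesis by simp
  qed
  show ?thesis
  proof (cases "w = 0")
    case True
    then show ?thesis using linear_0[OF lin] by simp
  next
    case False
    have "A ((e / norm w) *\<^sub>R w) = 0" using \<open>e > 0\<close> False by (intro small) simp
    then show ?thesis using \<open>e > 0\<close> False by (simp add: linear_scale[OF lin])
  qed
qed

lemma cball_inner_maximizer:
  fixes x g :: "'a::real_inner"
  assumes x: "norm x = 1" and max: "\<And>z. norm z \<le> 1 \<Longrightarrow> z \<bullet> g \<le> x \<bullet> g"
  shows "g = norm g *\<^sub>R x"
proof (cases "g = 0")
  case False
  have "norm g \<le> x \<bullet> g"
    using max[of "g /\<^sub>R norm g"] False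
    by (simp add: power2_norm_eq_inner[symmetric] power2_eq_square field_simps)
  moreover have "x \<bullet> g \<le> norm g" using norm_cauchy_schwarz[of x g] x by simp
  ultimately have "x \<bullet> g = norm g" by simp
  moreover have "x \<bullet> x = 1" "g \<bullet> g = norm g ^ 2"
    using x by (simp_all add: power2_norm_eq_inner norm_eq_1[symmetric])
  ultimately have "norm (g - norm g *\<^sub>R x)^2 = 0"
    by (simp add: power2_norm_eq_inner inner_diff_left inner_diff_right inner_commute
        power2_eq_square[symmetric])
  then show ?thesis by simp
qed simp

lemma norm_affine_sq_expand:
  assumes "linear A"
  shows "norm (A z + c)^2 = norm (A x + c)^2 + 2 * ((A x + c) \<bullet> A (z - x)) + norm (A (z - x))^2"
proof -
  have "A z + c = (A x + c) + A (z - x)" using linear_diff[OF assms] by simp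
  then show ?thesis by (simp add: power2_norm_eq_inner inner_add_left inner_add_right inner_commute)
qed

text \<open>\<open>(A x + c) \<bullet> A w = \<mu> * (x \<bullet> w)\<close> for all \<open>w\<close> says that the gradient
  \<open>2 * adjoint A (A x + c)\<close> of \<open>norm (A x + c)^2\<close> at \<open>x\<close> is \<open>2 * \<mu> *\<^sub>R x\<close>.\<close>

definition lagrange_multiplier :: "('a::real_inner \<Rightarrow> 'a) \<Rightarrow> 'a \<Rightarrow> 'a \<Rightarrow> real \<Rightarrow> bool" where
  "lagrange_multiplier A c x \<mu> \<longleftrightarrow> (\<forall>w. (A x + c) \<bullet> A w = \<mu> * (x \<bullet> w))"

lemma lagrange_multiplier_exists:
  fixes A :: "'a::euclidean_space \<Rightarrow> 'a"
  assumes lin: "linear A" and into: "\<And>z. norm z \<le> 1 \<Longrightarrow> norm (A z + c) \<le> 1"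
    and x: "norm x = 1" "norm (A x + c) = 1"
  shows "\<exists>\<mu>. lagrange_multiplier A c x \<mu>"
proof -
  define g where "g = adjoint A (A x + c)"
  have g: "(A x + c) \<bullet> A w = w \<bullet> g" for w
    using adjoint_works[OF lin, of w "A x + c"] by (simp add: g_def inner_commute)
  have "z \<bullet> g \<le> x \<bullet> g" if "norm z \<le> 1" for z
  proof -
    have "norm (A z + c)^2 \<le> 1" using into[OF that] by (simp add: power_le_one)
    moreover note norm_affine_sq_expand[OF lin, of z c x]
    moreover have "norm (A x + c)^2 = 1" using x(2) by simp
    moreover have "0 \<le> norm (A (z - x))^2" by simp
    ultimately have "(A x + c) \<bullet> A (z - x) \<le> 0" by linarith
    then show ?thesis by (simp add: g inner_diff_left)
  qed
  then have "g = norm g *\<^sub>R x" using x(1) by (rule cball_inner_maximizer[rotated])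
  then have "lagrange_multiplier A c x (norm g)"
    unfolding lagrange_multiplier_def by (metis g inner_commute inner_scaleR_right)
  then show ?thesis by blast
qed

lemma lagrange_multipliers_eq:
  fixes A :: "'a::real_inner \<Rightarrow> 'a"
  assumes lin: "linear A"
    and x: "norm x = 1" "norm (A x + c) = 1" "lagrange_multiplier A c x \<mu>"
    and y: "norm y = 1" "norm (A y + c) = 1" "lagrange_multiplier A c y \<nu>"
    and "x \<noteq> y"
  shows "\<mu> = \<nu>"
proof -
  have xx: "x \<bullet> x = 1" "y \<bullet> y = 1" using x y by (simp_all add: norm_eq_1[symmetric])
  have "x \<bullet> y \<noteq> 1"
  proof
    assume "x \<bullet> y = 1"
    then have "norm (x - y)^2 = 0"
      using xx by (simp add: power2_norm_eq_inner inner_diff_left inner_diff_right inner_commute)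
    with \<open>x \<noteq> y\<close> show False by simp
  qed
  have "A (x - y) = - A (y - x)" using linear_diff[OF lin] by simp
  then have "norm (A (x - y)) = norm (A (y - x))" by simp
  moreover have "0 = 2 * (\<mu> * (x \<bullet> (y - x))) + norm (A (y - x))^2"
    using norm_affine_sq_expand[OF lin, of y c x] x y by (simp add: lagrange_multiplier_def)
  moreover have "0 = 2 * (\<nu> * (y \<bullet> (x - y))) + norm (A (x - y))^2"
    using norm_affine_sq_expand[OF lin, of x c y] x y by (simp add: lagrange_multiplier_def)
  ultimately have "(\<mu> - \<nu>) * (x \<bullet> y - 1) = 0"
    using xx by (simp add: inner_diff_right inner_commute algebra_simps)
  with \<open>x \<bullet> y \<noteq> 1\<close> show ?thesis by simp
qed

lemma affine_lagrange_multiplier_set: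
  fixes A :: "'a::real_inner \<Rightarrow> 'a"
  assumes lin: "linear A"
  shows "affine {y. lagrange_multiplier A c y \<mu>}"
  unfolding affine_def
proof (intro ballI allI impI)
  fix x y :: 'a and u v :: real
  assume "x \<in> {y. lagrange_multiplier A c y \<mu>}" "y \<in> {y. lagrange_multiplier A c y \<mu>}" "u + v = 1"
  then have x: "(A x + c) \<bullet> A w = \<mu> * (x \<bullet> w)" and y: "(A y + c) \<bullet> A w = \<mu> * (y \<bullet> w)"
    and Auv: "A (u *\<^sub>R x + v *\<^sub>R y) + c = u *\<^sub>R (A x + c) + v *\<^sub>R (A y + c)" for w
    by (simp_all add: lagrange_multiplier_def linear_add[OF lin] linear_scale[OF lin] algebra_simps
        flip: scaleR_add_left)
  have "(A (u *\<^sub>R x + v *\<^sub>R y) + c) \<bullet> A w = \<mu> * ((u *\<^sub>R x + v *\<^sub>R y) \<bullet> w)" for w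
  proof -
    have "(A (u *\<^sub>R x + v *\<^sub>R y) + c) \<bullet> A w = u * ((A x + c) \<bullet> A w) + v * ((A y + c) \<bullet> A w)"
      unfolding Auv by (simp only: inner_add_left inner_scaleR_left)
    also have "\<dots> = \<mu> * ((u *\<^sub>R x + v *\<^sub>R y) \<bullet> w)"
      unfolding x y by (simp add: inner_add_left algebra_simps)
    finally show ?thesis .
  qed
  then show "u *\<^sub>R x + v *\<^sub>R y \<in> {y. lagrange_multiplier A c y \<mu>}"
    by (simp add: lagrange_multiplier_def)
qed

lemma norm_sq_diff_lagrange_multiplier:
  fixes A :: "'a::real_inner \<Rightarrow> 'a"
  assumes lin: "linear A"
    and "lagrange_multiplier A c x \<mu>" "lagrange_multiplier A c z \<mu>"
  shows "norm (A z + c)^2 - norm (A x + c)^2 = \<mu> * (norm z^2 - norm x^2)"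
proof -
  have "norm (A z + c)^2 - norm (A x + c)^2 = ((A z + c) + (A x + c)) \<bullet> ((A z + c) - (A x + c))"
    by (simp add: power2_norm_eq_inner algebra_simps inner_commute)
  also have "(A z + c) - (A x + c) = A (z - x)" using linear_diff[OF lin] by simp
  also have "((A z + c) + (A x + c)) \<bullet> A (z - x) = \<mu> * (z \<bullet> (z - x)) + \<mu> * (x \<bullet> (z - x))"
    using assms(2,3) by (simp only: inner_add_left lagrange_multiplier_def)
  also have "\<dots> = \<mu> * ((z + x) \<bullet> (z - x))" by (simp add: inner_add_left algebra_simps)
  also have "\<dots> = \<mu> * (norm z^2 - norm x^2)"
    by (simp add: power2_norm_eq_inner algebra_simps inner_commute)
  finally show ?thesis .
qed

definition contact_set :: "('a::real_normed_vector \<Rightarrow> 'a) \<Rightarrow> 'a set" where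
  "contact_set f = {x. norm x \<le> 1 \<and> norm (f x) = 1}"

lemma contact_set_affine_hull:
  fixes f :: "'a::euclidean_space \<Rightarrow> 'a"
  assumes "affine_map f" and pos: "K_positive (cball 0 1) f"
    and sphere: "contact_set f \<subseteq> sphere 0 1"
    and z: "z \<in> affine hull contact_set f" "norm z = 1"
  shows "z \<in> contact_set f"
proof -
  obtain A c where lin: "linear A" and f: "\<And>x. f x = A x + c"
    using \<open>affine_map f\<close> by (auto simp: affine_map_def)
  have into: "norm (A x + c) \<le> 1" if "norm x \<le> 1" for x
    using pos that by (simp add: K_positive_cball_iff flip: f)
  have contact: "norm x = 1" "norm (A x + c) = 1" if "x \<in> contact_set f" for x
    using that sphere by (auto simp: contact_set_def f)
  have "contact_set f \<noteq> {}" using z(1) by auto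
  then obtain x0 where x0: "x0 \<in> contact_set f" by blast
  then obtain \<mu> where \<mu>: "lagrange_multiplier A c x0 \<mu>"
    using lagrange_multiplier_exists[OF lin] into contact by (metis f)
  have "contact_set f \<subseteq> {y. lagrange_multiplier A c y \<mu>}"
  proof
    fix y assume y: "y \<in> contact_set f"
    then obtain \<nu> where \<nu>: "lagrange_multiplier A c y \<nu>"
      using lagrange_multiplier_exists[OF lin] into contact by (metis f)
    have "\<nu> = \<mu> \<or> y = x0"
      using lagrange_multipliers_eq[OF lin contact(1,2)[OF y] \<nu> contact(1,2)[OF x0] \<mu>] by blast
    then show "y \<in> {y. lagrange_multiplier A c y \<mu>}" using \<nu> \<mu> by auto
  qed
  moreover have "affine {y. lagrange_multiplier A c y \<mu>}"
    by (rule affine_lagrange_multiplier_set[OF lin])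
  ultimately have "lagrange_multiplier A c z \<mu>" using z(1) hull_minimal by blast
  then have "norm (A z + c)^2 - norm (A x0 + c)^2 = \<mu> * (norm z^2 - norm x0^2)"
    using norm_sq_diff_lagrange_multiplier[OF lin \<mu>] by simp
  then have "norm (f z) = 1" using contact[OF x0] z(2) by (simp add: f abs_square_eq_1)
  then show ?thesis using z(2) by (simp add: contact_set_def)
qed

section \<open>The upper bound\<close>

locale primitive_affine_ball_map =
  fixes \<Phi> :: "'a::euclidean_space \<Rightarrow> 'a"
  assumes affine: "affine_map \<Phi>" and primitive: "K_primitive (cball 0 1) \<Phi>"
begin

lemma positive: "K_positive (cball 0 1) \<Phi>"
  using primitive by (simp add: K_primitive_def)

lemma maps_ball: "norm x \<le> 1 \<Longrightarrow> norm (\<Phi> x) \<le> 1"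
  using positive by (simp add: K_positive_cball_iff)

lemma funpow_maps_ball: "norm x \<le> 1 \<Longrightarrow> norm ((\<Phi> ^^ k) x) \<le> 1"
  using K_positive_funpow[OF positive] by (simp add: K_positive_cball_iff)

lemma strictly_positive_power:
  obtains m where "1 \<le> m" "\<And>x. norm x \<le> 1 \<Longrightarrow> norm ((\<Phi> ^^ m) x) < 1"
  using primitive by (auto simp: K_primitive_def strictly_K_positive_cball_iff)

lemma image_ball_subset_ball: "\<Phi> ` ball 0 1 \<subseteq> ball 0 1"
proof (rule image_subsetI, rule ccontr)
  fix y :: 'a
  assume "y \<in> ball 0 1" "\<Phi> y \<notin> ball 0 1"
  then have y: "norm y < 1" "norm (\<Phi> y) = 1" using maps_ball[of y] by simp_all
  obtain A c where lin: "linear A" and \<Phi>: "\<And>x. \<Phi> x = A x + c"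
    using affine by (auto simp: affine_map_def)
  have "A w = 0" for w
  proof (rule linear_eq_0_if_interior_contact[OF lin _ y(1)])
    show "norm (A z + c) \<le> 1" if "norm z \<le> 1" for z using maps_ball[OF that] by (simp add: \<Phi>)
    show "norm (A y + c) = 1" using y(2) by (simp add: \<Phi>)
  qed
  then have const: "(\<Phi> ^^ Suc j) x = c" for j x
    by (induction j) (simp_all add: \<Phi>)
  obtain m where m: "1 \<le> m" "\<And>x. norm x \<le> 1 \<Longrightarrow> norm ((\<Phi> ^^ m) x) < 1"
    using strictly_positive_power by blast
  have "norm c = 1" using y(2) const[of 0 y] by simp
  then show False using const[of "m - 1" 0] m(1) m(2)[of 0] by simp
qed

lemma contact_set_funpow_antimono:
  "j \<le> k \<Longrightarrow> contact_set (\<Phi> ^^ k) \<subseteq> contact_set (\<Phi> ^^ j)"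
  using norm_funpow_eq_1_earlier[OF positive image_ball_subset_ball] by (auto simp: contact_set_def)

lemma contact_set_funpow_sphere: "contact_set (\<Phi> ^^ k) \<subseteq> sphere 0 1"
  using contact_set_funpow_antimono[of 0 k] by (auto simp: contact_set_def)

text \<open>A stationary contact set is invariant under \<open>\<Phi>\<close>, but some power of \<open>\<Phi>\<close> maps the ball
  into its interior.\<close>

lemma contact_set_funpow_stationary:
  assumes "contact_set (\<Phi> ^^ Suc k) = contact_set (\<Phi> ^^ k)"
  shows "contact_set (\<Phi> ^^ k) = {}"
proof -
  define T where "T = contact_set (\<Phi> ^^ k)"
  have "\<Phi> x \<in> T" if "x \<in> T" for x
  proof -
    have "x \<in> contact_set (\<Phi> ^^ Suc k)" using that assms by (simp add: T_def)
    then have "norm ((\<Phi> ^^ k) (\<Phi> x)) = 1"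
      by (simp add: contact_set_def funpow_Suc_right del: funpow.simps)
    then show ?thesis using that maps_ball by (simp add: T_def contact_set_def)
  qed
  then have invariant: "(\<Phi> ^^ j) x \<in> T" if "x \<in> T" for j x
    using that by (induction j) auto
  obtain m where strict: "\<And>x. norm x \<le> 1 \<Longrightarrow> norm ((\<Phi> ^^ m) x) < 1"
    using strictly_positive_power by blast
  have "x \<notin> T" for x
  proof
    assume "x \<in> T"
    then have "norm x = 1" "norm ((\<Phi> ^^ m) x) = 1"
      using invariant[of x m] contact_set_funpow_sphere[of k] by (auto simp: T_def)
    then show False using strict[of x] by simp
  qed
  then show ?thesis by (auto simp: T_def)
qed

lemma aff_dim_contact_set_funpow:
  "contact_set (\<Phi> ^^ k) \<noteq> {} \<Longrightarrow> aff_dim (contact_set (\<Phi> ^^ k)) \<le> int DIM('a) - int k"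
proof (induction k)
  case 0
  then show ?case using aff_dim_le_DIM by simp
next
  case (Suc k)
  let ?T = "contact_set (\<Phi> ^^ k)" and ?T' = "contact_set (\<Phi> ^^ Suc k)"
  have sub: "?T' \<subseteq> ?T" by (rule contact_set_funpow_antimono) simp
  have "aff_dim ?T' \<noteq> aff_dim ?T"
  proof
    assume "aff_dim ?T' = aff_dim ?T"
    then have hull_eq: "affine hull ?T' = affine hull ?T"
      using Suc.prems hull_mono[OF sub] by (intro affine_dim_equal) (simp_all del: funpow.simps)
    have "?T \<subseteq> ?T'"
    proof
      fix x assume "x \<in> ?T"
      then have "x \<in> affine hull ?T'" "norm x = 1"
        using hull_eq hull_inc contact_set_funpow_sphere by fastforce+
      then show "x \<in> ?T'"
        using contact_set_affine_hull[OF affine_map_funpow[OF affine] K_positive_funpow[OF positive]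
            contact_set_funpow_sphere] by blast
    qed
    then show False using Suc.prems contact_set_funpow_stationary sub by blast
  qed
  then have "aff_dim ?T' < aff_dim ?T" using aff_dim_subset[OF sub] by simp
  moreover have "?T \<noteq> {}" using Suc.prems sub by blast
  ultimately show ?case using Suc.IH by (simp del: funpow.simps)
qed

lemma strictly_K_positive_DIM_Suc: "strictly_K_positive (cball 0 1) (\<Phi> ^^ (DIM('a) + 1))"
proof -
  let ?T = "contact_set (\<Phi> ^^ (DIM('a) + 1))"
  have "?T = {}"
  proof (rule ccontr)
    assume "?T \<noteq> {}"
    then have "aff_dim ?T \<le> -1" using aff_dim_contact_set_funpow by fastforce
    then have "aff_dim ?T = -1" using aff_dim_geq[of ?T] by linarith
    with \<open>?T \<noteq> {}\<close> show False using aff_dim_empty by blast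
  qed
  then have "norm ((\<Phi> ^^ (DIM('a) + 1)) x) < 1" if "norm x \<le> 1" for x
    using that funpow_maps_ball[OF that, of "DIM('a) + 1"]
    by (auto simp: contact_set_def order_less_le simp del: funpow.simps)
  then show ?thesis by (simp add: strictly_K_positive_cball_iff)
qed

lemma gamma_aff_map_le_DIM_Suc: "gamma_aff_map (cball 0 1) \<Phi> \<le> DIM('a) + 1"
  using strictly_K_positive_DIM_Suc by (intro gamma_aff_map_le) simp_all

end

lemma gamma_aff_cball_le: "gamma_aff (cball (0::'a::euclidean_space) 1) \<le> enat (DIM('a) + 1)"
  unfolding gamma_aff_def
proof (rule SUP_least)
  fix \<Phi> :: "'a \<Rightarrow> 'a"
  assume "\<Phi> \<in> {\<Phi>. affine_map \<Phi> \<and> K_primitive (cball 0 1) \<Phi>}"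
  then interpret primitive_affine_ball_map \<Phi> by unfold_locales auto
  show "enat (gamma_aff_map (cball 0 1) \<Phi>) \<le> enat (DIM('a) + 1)"
    using gamma_aff_map_le_DIM_Suc by simp
qed

section \<open>The lower bound\<close>

locale extremal_shift_map =
  fixes h :: "nat \<Rightarrow> 'n::finite" and m :: nat
  assumes bij: "bij_betw h {..m} UNIV"
begin

definition index :: "'n \<Rightarrow> nat" where "index = inv_into {..m} h"

lemma index_h [simp]: "i \<le> m \<Longrightarrow> index (h i) = i"
  using bij by (simp add: index_def bij_betw_def inv_into_f_f)

lemma norm_sq_coords: "norm x ^ 2 = (\<Sum>i\<le>m. (x $ h i)^2)"
proof -
  have "norm x ^ 2 = x \<bullet> x" by (rule power2_norm_eq_inner)
  also have "\<dots> = (\<Sum>j\<in>UNIV. (x $ j)^2)" by (simp add: inner_vec_def power2_eq_square)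
  also have "\<dots> = (\<Sum>i\<le>m. (x $ h i)^2)"
    using sum.reindex_bij_betw[OF bij, of "\<lambda>j. (x $ j)^2"] by simp
  finally show ?thesis .
qed

text \<open>\<open>\<tau>\<close> makes \<open>chain_start\<close> below a unit vector, and \<open>\<rho>\<close> is chosen so that
  \<open>1 - norm (shift_map x)^2\<close> is a sum of two terms that are nonnegative on the ball
  (\<open>norm_shift_map_sq\<close>), one vanishing exactly on the sphere, the other exactly where the last
  coordinate is \<open>\<tau>\<close>.\<close>

definition \<tau> :: real where "\<tau> = 1 / sqrt (\<Sum>i\<le>m. 4 ^ (m - i))"

definition \<rho> :: real where "\<rho> = sqrt (3 + \<tau>^2)"

lemma \<tau>_pos: "\<tau> > 0" and \<tau>_sq: "\<tau>^2 * (\<Sum>i\<le>m. 4 ^ (m - i)) = 1"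
proof -
  have "(\<Sum>i\<le>m. 4 ^ (m - i)) \<ge> (1::real)"
    using sum_mono2[of "{..m}" "{m}" "\<lambda>i. 4 ^ (m - i) :: real"] by simp
  then show "\<tau> > 0" "\<tau>^2 * (\<Sum>i\<le>m. 4 ^ (m - i)) = 1" by (simp_all add: \<tau>_def power_divide)
qed

lemma \<rho>_pos: "\<rho> > 0" and \<rho>_sq: "\<rho>^2 = 3 + \<tau>^2"
  by (simp_all add: \<rho>_def add_pos_nonneg)

definition shift_map :: "real^'n \<Rightarrow> real^'n" where
  "shift_map x =
    (\<chi> j. if index j = 0 then - (3 + \<tau> * x $ h m) / (2 * \<rho>) else x $ h (index j - 1) / 2)"

lemma shift_map_0: "shift_map x $ h 0 = - (3 + \<tau> * x $ h m) / (2 * \<rho>)"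
  by (simp add: shift_map_def)

lemma shift_map_Suc: "i < m \<Longrightarrow> shift_map x $ h (Suc i) = x $ h i / 2"
  by (simp add: shift_map_def)

lemma affine_shift_map: "affine_map shift_map"
  unfolding affine_map_iff_linear
  by (rule linearI) (use \<rho>_pos in \<open>auto simp: shift_map_def vec_eq_iff field_simps\<close>)

lemma norm_shift_map_sq:
  "norm (shift_map x)^2 = 1 - 3 * (x $ h m - \<tau>)^2 / (4 * \<rho>^2) - (1 - norm x^2) / 4"
proof -
  have "norm (shift_map x)^2 = (shift_map x $ h 0)^2 + (\<Sum>i<m. (shift_map x $ h (Suc i))^2)"
    by (simp only: norm_sq_coords flip: lessThan_Suc_atMost) (rule sum.lessThan_Suc_shift)
  also have "\<dots> = (3 + \<tau> * x $ h m)^2 / (4 * \<rho>^2) + (\<Sum>i<m. (x $ h i)^2) / 4"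
    by (simp add: shift_map_0 shift_map_Suc power_divide sum_divide_distrib power_mult_distrib)
      (simp add: power2_eq_square algebra_simps)
  also have "(\<Sum>i<m. (x $ h i)^2) = norm x^2 - (x $ h m)^2"
    by (simp add: norm_sq_coords flip: lessThan_Suc_atMost)
  also have "(3 + \<tau> * x $ h m)^2 = \<rho>^2 * (3 + (x $ h m)^2) - 3 * (x $ h m - \<tau>)^2"
    unfolding \<rho>_sq by (simp add: algebra_simps power2_eq_square)
  finally show ?thesis using \<rho>_pos by (simp add: field_simps)
qed

lemma shift_map_maps_ball:
  assumes "norm x \<le> 1"
  shows "norm (shift_map x) \<le> 1"
proof -
  have "0 \<le> (1 - norm x^2) / 4" using assms by (simp add: power_le_one)
  moreover have "0 \<le> 3 * (x $ h m - \<tau>)^2 / (4 * \<rho>^2)" by simp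
  ultimately have "norm (shift_map x)^2 \<le> 1" using norm_shift_map_sq[of x] by linarith
  then show ?thesis by (simp add: power_le_one_iff)
qed

lemma shift_map_contact:
  assumes "norm x \<le> 1"
  shows "norm (shift_map x) = 1 \<longleftrightarrow> norm x = 1 \<and> x $ h m = \<tau>"
proof -
  have "0 \<le> (1 - norm x^2) / 4" using assms by (simp add: power_le_one)
  moreover have "0 \<le> 3 * (x $ h m - \<tau>)^2 / (4 * \<rho>^2)" by simp
  ultimately have "norm (shift_map x)^2 = 1 \<longleftrightarrow>
      3 * (x $ h m - \<tau>)^2 / (4 * \<rho>^2) = 0 \<and> (1 - norm x^2) / 4 = 0"
    using norm_shift_map_sq[of x] by linarith
  also have "\<dots> \<longleftrightarrow> x $ h m = \<tau> \<and> norm x = 1"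
    using \<rho>_pos by (simp add: abs_square_eq_1)
  finally show ?thesis by (auto simp: abs_square_eq_1)
qed

lemma K_positive_shift_map: "K_positive (cball 0 1) shift_map"
  using shift_map_maps_ball by (simp add: K_positive_cball_iff)

lemma shift_map_image_ball: "shift_map ` ball 0 1 \<subseteq> ball 0 1"
  using shift_map_maps_ball shift_map_contact by (fastforce simp: order_less_le)

definition chain_start :: "real^'n" where "chain_start = (\<chi> j. \<tau> * 2 ^ (m - index j))"

lemma norm_chain_start: "norm chain_start = 1"
proof -
  have "(2::real) ^ k * 2 ^ k = 4 ^ k" for k by (simp flip: power_mult_distrib)
  then have "norm chain_start ^ 2 = (\<Sum>i\<le>m. \<tau>^2 * 4 ^ (m - i))"
    unfolding norm_sq_coords by (simp add: chain_start_def power2_eq_square algebra_simps)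
  also have "\<dots> = 1" using \<tau>_sq by (simp add: sum_distrib_left)
  finally show ?thesis by (simp add: abs_square_eq_1)
qed

lemma shift_map_funpow_chain_start:
  "j \<le> Suc m \<Longrightarrow> norm ((shift_map ^^ j) chain_start) = 1 \<and>
    (\<forall>i. j \<le> i \<and> i \<le> m \<longrightarrow> (shift_map ^^ j) chain_start $ h i = \<tau> * 2 ^ (m - i))"
proof (induction j)
  case 0
  then show ?case using norm_chain_start by (simp add: chain_start_def)
next
  case (Suc j)
  define y where "y = (shift_map ^^ j) chain_start"
  have y: "norm y = 1" "\<And>i. j \<le> i \<Longrightarrow> i \<le> m \<Longrightarrow> y $ h i = \<tau> * 2 ^ (m - i)"
    using Suc by (auto simp: y_def)
  have "norm (shift_map y) = 1" using y Suc.prems by (simp add: shift_map_contact)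
  moreover have "shift_map y $ h i = \<tau> * 2 ^ (m - i)" if i: "Suc j \<le> i" "i \<le> m" for i
  proof -
    obtain i' where i': "i = Suc i'" using Suc_le_D[OF i(1)] by blast
    then have "m - i' = Suc (m - i)" using i by simp
    then show ?thesis using i' i y(2)[of i'] by (simp add: shift_map_Suc)
  qed
  ultimately show ?case by (simp add: y_def)
qed

lemma shift_map_funpow_coord:
  "j \<le> m \<Longrightarrow> (shift_map ^^ Suc j) z $ h j = shift_map z $ h 0 / 2 ^ j"
  by (induction j) (simp_all add: shift_map_Suc)

lemma strictly_K_positive_shift_map: "strictly_K_positive (cball 0 1) (shift_map ^^ (m + 2))"
proof -
  have "norm ((shift_map ^^ (m + 2)) z) < 1" if z: "norm z \<le> 1" for z
  proof (rule ccontr)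
    have into: "norm ((shift_map ^^ k) z) \<le> 1" for k
      using K_positive_funpow[OF K_positive_shift_map] z by (simp add: K_positive_cball_iff)
    assume "\<not> norm ((shift_map ^^ (m + 2)) z) < 1"
    then have "norm ((shift_map ^^ (m + 2)) z) = 1" using into[of "m + 2"] by simp
    then have "norm ((shift_map ^^ Suc j) z) = 1" if "j \<le> m + 1" for j
      by (rule norm_funpow_eq_1_earlier[OF K_positive_shift_map shift_map_image_ball z])
        (use that in simp)
    then have contact: "(shift_map ^^ j) z $ h m = \<tau>" if j: "j \<le> m + 1" for j
      using j shift_map_contact[OF into[of j]] by simp
    have "\<tau> = shift_map z $ h 0 / 2 ^ m"
      using contact[of "Suc m"] shift_map_funpow_coord[of m z] by simp
    also have "\<dots> = - (3 + \<tau> * \<tau>) / (2 * \<rho>) / 2 ^ m"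
      using contact[of 0] by (simp add: shift_map_0)
    also have "\<dots> < 0"
    proof -
      have "- (3 + \<tau> * \<tau>) < 0" using zero_le_square[of \<tau>] by linarith
      then show ?thesis by (simp add: divide_neg_pos \<rho>_pos)
    qed
    finally show False using \<tau>_pos by simp
  qed
  then show ?thesis by (simp add: strictly_K_positive_cball_iff)
qed

lemma not_strictly_K_positive_shift_map:
  "j \<le> m + 1 \<Longrightarrow> \<not> strictly_K_positive (cball 0 1) (shift_map ^^ j)"
  using shift_map_funpow_chain_start[of j] norm_chain_start
  by (auto simp: strictly_K_positive_cball_iff intro!: exI[of _ chain_start])

lemma K_primitive_shift_map: "K_primitive (cball 0 1) shift_map"
  using K_positive_shift_map strictly_K_positive_shift_map
  by (auto simp: K_primitive_def intro!: exI[of _ "m + 2"])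

lemma gamma_aff_map_shift_map: "gamma_aff_map (cball 0 1) shift_map = m + 2"
  using strictly_K_positive_shift_map not_strictly_K_positive_shift_map
  by (intro gamma_aff_map_eqI) auto

end

lemma gamma_aff_cball_ge: "enat (CARD('n) + 1) \<le> gamma_aff (cball (0::real^'n) 1)"
proof -
  obtain m where m: "CARD('n) = Suc m" using not0_implies_Suc[of "CARD('n)"] by auto
  then obtain h :: "nat \<Rightarrow> 'n" where "bij_betw h {..m} UNIV"
    using ex_bij_betw_nat_finite[of "UNIV :: 'n set"]
    by (auto simp: atLeast0LessThan lessThan_Suc_atMost)
  then interpret extremal_shift_map h m by unfold_locales
  have "enat (gamma_aff_map (cball 0 1) shift_map) \<le> gamma_aff (cball (0::real^'n) 1)"
    unfolding gamma_aff_def using affine_shift_map K_primitive_shift_map by (intro SUP_upper) simp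
  then show ?thesis using gamma_aff_map_shift_map m by simp
qed

theorem theorem3:
  shows "gamma_aff (cball (0::real^'n) 1) = enat (CARD('n) + 1)"
  using gamma_aff_cball_le[where 'a = "real^'n"] gamma_aff_cball_ge[where 'n = 'n]
  by (simp add: antisym)

end
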